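(* Let $n\ge 2$, $d\ge n+1$, and let $f$ be a Perazzo form of degree $d$ in $S$ with $A_f$ having $h$-vector $(h_0,\dots,h_d)$. If $A_f$ has the weak Lefschetz property, then $\#\{i\mid h_i=d+2\}\le 1$.
   Context: $K$ is an algebraically closed field of characteristic zero. $S=K[x_0,\dots,x_n,u,v]$ and $R=K[y_0,\dots,y_n,U,V]$ acts on $S$ by differentiation ($y_i=\partial/\partial x_i$, $U=\partial/\partial u$, $V=\partial/\partial v$); write $\theta\circ f$ for this action. A Perazzo form of degree $d$ is $f=x_0p_0+x_1p_1+\cdots+x_np_n+g$ where $p_0,\dots,p_n\in K[u,v]_{d-1}$ are linearly independent but algebraically dependent forms and $g\in K[u,v]_d$. $\operatorname{Ann}_R(f)=\{\theta\in R:\theta\circ f=0\}$ and $A_f=R/\operatorname{Ann}_R(f)$ is a graded artinian Gorenstein algebra of socle degree $d$; its $h$-vector is $h_i=\dim_K [A_f]_i$, and satisfies $h_i=h_{d-i}$. A graded artinian algebra $A$ has the weak Lefschetz property (WLP) if there is $\ell\in[A]_1$ such that multiplication $\times\ell:[A]_i\to[A]_{i+1}$ has maximal rank (is injective or surjective) for every $i\ge 0$. *)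

theory Defs
  imports Main "HOL-Library.Poly_Mapping" "HOL-Computational_Algebra.Polynomial"
begin

(* In S (and R) the variables are indexed by
  0..n (x_0..x_n resp. y_0..y_n), n+1 (u resp. U) and n+2 (v resp. V).*)

type_synonym 'a mpoly = "(nat \<Rightarrow>\<^sub>0 nat) \<Rightarrow>\<^sub>0 'a"

definition alg_closed :: "'a::field itself \<Rightarrow> bool" where
  "alg_closed _ \<longleftrightarrow> (\<forall>q::'a poly. Polynomial.degree q > 0 \<longrightarrow> (\<exists>x. poly q x = 0))"

definition mscale :: "'a::field \<Rightarrow> 'a mpoly \<Rightarrow> 'a mpoly" where
  "mscale c p = Poly_Mapping.map (\<lambda>a. c * a) p"

lemma vector_space_mscale: "vector_space (mscale :: 'a::field \<Rightarrow> 'a mpoly \<Rightarrow> 'a mpoly)"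
  unfolding mscale_def
  by unfold_locales
     (simp_all add: poly_mapping_eq_iff fun_eq_iff map.rep_eq plus_poly_mapping.rep_eq
        when_def algebra_simps flip: distrib_left)

definition mvar :: "nat \<Rightarrow> 'a::field mpoly" where
  "mvar k = Poly_Mapping.single (Poly_Mapping.single k 1) 1"

definition mon_deg :: "(nat \<Rightarrow>\<^sub>0 nat) \<Rightarrow> nat" where
  "mon_deg \<alpha> = (\<Sum>k\<in>Poly_Mapping.keys \<alpha>. Poly_Mapping.lookup \<alpha> k)"

definition forms :: "nat set \<Rightarrow> nat \<Rightarrow> 'a::field mpoly set" where
  "forms V i = {p. \<forall>\<alpha>\<in>Poly_Mapping.keys p. Poly_Mapping.keys \<alpha> \<subseteq> V \<and> mon_deg \<alpha> = i}"

definition polys_in :: "nat set \<Rightarrow> 'a::field mpoly set" where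
  "polys_in V = {p. \<forall>\<alpha>\<in>Poly_Mapping.keys p. Poly_Mapping.keys \<alpha> \<subseteq> V}"

(* Action of R on S by differentiation: y^\<beta> \<circ> x^\<alpha> = \<alpha>!/(\<alpha>-\<beta>)! x^(\<alpha>-\<beta>) if \<beta> \<le> \<alpha>, else 0,
  extended bilinearly.*)
definition mon_diff_coeff :: "(nat \<Rightarrow>\<^sub>0 nat) \<Rightarrow> (nat \<Rightarrow>\<^sub>0 nat) \<Rightarrow> nat" where
  "mon_diff_coeff \<beta> \<alpha> =
     (\<Prod>k\<in>Poly_Mapping.keys \<alpha>. fact (Poly_Mapping.lookup \<alpha> k) div fact (Poly_Mapping.lookup \<alpha> k - Poly_Mapping.lookup \<beta> k))"

definition apolar :: "'a::field mpoly \<Rightarrow> 'a mpoly \<Rightarrow> 'a mpoly" where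
  "apolar \<theta> f = (\<Sum>\<beta>\<in>Poly_Mapping.keys \<theta>. \<Sum>\<alpha>\<in>Poly_Mapping.keys f.
      if (\<forall>k. Poly_Mapping.lookup \<beta> k \<le> Poly_Mapping.lookup \<alpha> k)
      then Poly_Mapping.single (\<alpha> - \<beta>)
             (Poly_Mapping.lookup \<theta> \<beta> * Poly_Mapping.lookup f \<alpha> * of_nat (mon_diff_coeff \<beta> \<alpha>))
      else 0)"

definition msubst :: "'a::field mpoly \<Rightarrow> (nat \<Rightarrow> 'a mpoly) \<Rightarrow> 'a mpoly" where
  "msubst F p = (\<Sum>\<gamma>\<in>Poly_Mapping.keys F.
      mscale (Poly_Mapping.lookup F \<gamma>) (\<Prod>k\<in>Poly_Mapping.keys \<gamma>. p k ^ Poly_Mapping.lookup \<gamma> k))"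

definition perazzo_form :: "nat \<Rightarrow> nat \<Rightarrow> 'a::field mpoly \<Rightarrow> bool" where
  "perazzo_form n d f \<longleftrightarrow> (\<exists>p g.
     (\<forall>i\<le>n. p i \<in> forms {n+1, n+2} (d - 1)) \<and>
     (\<forall>c. (\<Sum>i\<le>n. mscale (c i) (p i)) = 0 \<longrightarrow> (\<forall>i\<le>n. c i = 0)) \<and>
     (\<exists>F. F \<noteq> 0 \<and> F \<in> polys_in {..n} \<and> msubst F p = 0) \<and>
     g \<in> forms {n+1, n+2} d \<and>
     f = (\<Sum>i\<le>n. mvar i * p i) + g)"

definition Ann :: "nat \<Rightarrow> 'a::field mpoly \<Rightarrow> 'a mpoly set" where
  "Ann n f = {\<theta> \<in> polys_in {..n+2}. apolar \<theta> f = 0}"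

definition hvec :: "nat \<Rightarrow> 'a::field mpoly \<Rightarrow> nat \<Rightarrow> nat" where
  "hvec n f i = vector_space.dim mscale (forms {..n+2} i :: 'a mpoly set)
               - vector_space.dim mscale (Ann n f \<inter> forms {..n+2} i)"

(* WLP for A_f: some linear form l (a representative in R_1 of an element of [A_f]_1)
  such that each multiplication map [A_f]_i \<rightarrow> [A_f]_(i+1) is injective or surjective.*)
definition WLP :: "nat \<Rightarrow> 'a::field mpoly \<Rightarrow> bool" where
  "WLP n f \<longleftrightarrow> (\<exists>l\<in>forms {..n+2} 1. \<forall>i.
     (\<forall>\<theta>\<in>forms {..n+2} i. l * \<theta> \<in> Ann n f \<longrightarrow> \<theta> \<in> Ann n f) \<or>
     (\<forall>\<eta>\<in>forms {..n+2} (i+1). \<exists>\<theta>\<in>forms {..n+2} i. \<eta> - l * \<theta> \<in> Ann n f))"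

end

theory Submission
  imports Defs "HOL-Library.FuncSet"
begin

(* Every monomial of a Perazzo form f of degree d has degree at most one in x_0, ..., x_n.
   Hence a monomial operator of order i involving some y_j sends f into K[u,v]_(d-i), and the
   space of i-th partials of f, of dimension h_i, is spanned by the i+1 partials U^a V^(i-a) o f
   together with K[u,v]_(d-i); in particular h_i <= d+2.  If h_i = d+2, then all of K[u,v]_(d-i)
   consists of partials of f.  Every linear form l kills a nonzero binary form of degree d-i, so
   multiplication by l out of degree i is not injective; the WLP makes it surjective there, and
   then in all higher degrees.  But once multiplication by l is onto degree j, the j-th partials
   are spanned by the j partials (l_UV U^a V^(j-1-a)) o f, where l_UV is the U,V-part of l,
   together with K[u,v]_(d-j), so h_j <= d+1 for every j after i. *)

section \<open>Linear algebra\<close>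

context vector_space
begin

lemma subset_subspace_if_card_le_dim:
  assumes M: "subspace M" and T: "finite T" "M \<subseteq> span T" "card T \<le> dim M"
  shows "T \<subseteq> M"
proof -
  obtain B where B: "B \<subseteq> M" "independent B" "M \<subseteq> span B" "card B = dim M"
    by (rule basis_exists)
  have "T \<subseteq> span B"
  proof
    fix t assume t: "t \<in> T"
    show "t \<in> span B"
    proof (rule ccontr)
      assume t_out: "t \<notin> span B"
      then have "independent (insert t B)" by (rule independent_insertI[OF _ B(2)])
      moreover have "insert t B \<subseteq> span T"
        using B(1) T(2) span_base[OF t] by (rule insert_subsetI[rotated, OF order_trans])
      ultimately have "finite (insert t B) \<and> card (insert t B) \<le> card T"
        by (rule independent_span_bound[OF T(1)])
      moreover have "t \<notin> B" using t_out span_base by metis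
      ultimately show False using B(4) T(3) by auto
    qed
  qed
  also have "span B \<subseteq> M" by (rule span_minimal[OF B(1) M])
  finally show ?thesis .
qed

lemma eq_0_if_in_span_disjoint:
  assumes S: "independent S" and "A \<subseteq> S" "B \<subseteq> S" "A \<inter> B = {}"
    and "x \<in> span A" "x \<in> span B"
  shows "x = 0"
proof -
  obtain X where X: "finite {v. X v \<noteq> 0}" "{v. X v \<noteq> 0} \<subseteq> A" "x = (\<Sum>v | X v \<noteq> 0. X v *s v)"
    using \<open>x \<in> span A\<close> by (auto simp: span_explicit')
  obtain Y where Y: "finite {v. Y v \<noteq> 0}" "{v. Y v \<noteq> 0} \<subseteq> B" "x = (\<Sum>v | Y v \<noteq> 0. Y v *s v)"
    using \<open>x \<in> span B\<close> by (auto simp: span_explicit')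
  have "X = Y"
    using X Y assms(2,3) by (intro independentD_unique[OF S]) auto
  then have "{v. X v \<noteq> 0} = {}" using X(2) Y(2) assms(4) by auto
  then show ?thesis using X(3) by simp
qed

end

context vector_space_pair
begin

lemma dim_eq_dim_kernel_add_dim_image:
  assumes lin: "Vector_Spaces.linear s1 s2 \<phi>" and W: "vs1.subspace W"
    and S: "finite S" "W \<subseteq> vs1.span S"
  shows "vs1.dim W = vs1.dim {w\<in>W. \<phi> w = 0} + vs2.dim (\<phi> ` W)"
proof -
  define Z where "Z = {w\<in>W. \<phi> w = 0}"
  obtain K where K: "K \<subseteq> Z" "vs1.independent K" "Z \<subseteq> vs1.span K" "card K = vs1.dim Z"
    using vs1.basis_exists by blast
  have "K \<subseteq> W" using K(1) by (auto simp: Z_def)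
  then obtain C where C: "K \<subseteq> C" "C \<subseteq> W" "vs1.independent C" "W \<subseteq> vs1.span C"
    using vs1.maximal_independent_subset_extend[OF _ K(2)] by blast
  have finC: "finite C"
    using vs1.independent_span_bound[OF S(1) C(3)] C(2) S(2) by auto
  define D where "D = C - K"
  have inj: "inj_on \<phi> (vs1.span D)"
    unfolding linear_inj_on_iff_eq_0[OF lin vs1.subspace_span]
  proof (intro ballI impI)
    fix x assume x: "x \<in> vs1.span D" "\<phi> x = 0"
    have "vs1.span D \<subseteq> W" using C(2) by (intro vs1.span_minimal[OF _ W]) (auto simp: D_def)
    then have "x \<in> vs1.span K" using x K(3) by (auto simp: Z_def)
    then show "x = 0"
      using x(1) C(1) by (intro vs1.eq_0_if_in_span_disjoint[OF C(3), of D K]) (auto simp: D_def)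
  qed
  then have indep: "vs2.independent (\<phi> ` D)"
    using vs1.independent_mono[OF C(3)] by (intro linear_independent_injective_image[OF lin]) (auto simp: D_def)
  have "\<phi> ` C \<subseteq> insert 0 (\<phi> ` D)" using K(1) by (auto simp: D_def Z_def)
  then have "vs2.span (\<phi> ` C) \<subseteq> vs2.span (\<phi> ` D)"
    using vs2.span_mono[of "\<phi> ` C" "insert 0 (\<phi> ` D)"] by simp
  then have "\<phi> ` W \<subseteq> vs2.span (\<phi> ` D)"
    using linear_spans_image[OF lin C(4)] by (rule order_trans[rotated])
  moreover have "\<phi> ` D \<subseteq> \<phi> ` W" using C(2) by (auto simp: D_def)
  ultimately have "vs2.dim (\<phi> ` W) = card (\<phi> ` D)"
    using vs2.basis_card_eq_dim[OF _ _ indep] by simp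
  also have "\<dots> = card D"
    by (rule card_image[OF inj_on_subset[OF inj vs1.span_superset]])
  finally have "vs2.dim (\<phi> ` W) = card D" .
  moreover have "card D = card C - card K"
    using finC C(1) by (simp add: D_def card_Diff_subset finite_subset)
  moreover have "card K \<le> card C" using card_mono[OF finC C(1)] .
  moreover have "vs1.dim W = card C"
    using vs1.basis_card_eq_dim[OF C(2) C(4) C(3)] by simp
  ultimately show ?thesis using K(4) by (simp add: Z_def)
qed

end

section \<open>Polynomials as vectors and the apolarity action\<close>

interpretation mv: vector_space "mscale :: 'a::field \<Rightarrow> 'a mpoly \<Rightarrow> 'a mpoly"
  by (rule vector_space_mscale)

lemma vector_space_pair_mscale: "vector_space_pair (mscale :: 'a::field \<Rightarrow> 'a mpoly \<Rightarrow> 'a mpoly) mscale"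
  by (simp add: vector_space_pair_def vector_space_mscale)

definition mmonom :: "(nat \<Rightarrow>\<^sub>0 nat) \<Rightarrow> 'a::field mpoly" where
  "mmonom \<alpha> = Poly_Mapping.single \<alpha> 1"

abbreviation mdvd :: "(nat \<Rightarrow>\<^sub>0 nat) \<Rightarrow> (nat \<Rightarrow>\<^sub>0 nat) \<Rightarrow> bool" where
  "mdvd \<beta> \<alpha> \<equiv> \<forall>k. Poly_Mapping.lookup \<beta> k \<le> Poly_Mapping.lookup \<alpha> k"

lemma lookup_mscale [simp]: "Poly_Mapping.lookup (mscale c p) k = c * Poly_Mapping.lookup p k"
  by (simp add: mscale_def map.rep_eq when_def)

lemma mscale_single [simp]: "mscale c (Poly_Mapping.single k a) = Poly_Mapping.single k (c * a)"
  by (simp add: poly_mapping_eq_iff fun_eq_iff lookup_single when_def)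

lemma mscale_eq_mult: "mscale c p = Poly_Mapping.single 0 c * p"
proof -
  have "(\<lambda>a. c * a) = (*) c" by auto
  then show ?thesis by (simp add: mscale_def mult_map_scale_conv_mult)
qed

lemma mult_mscale_left: "mscale c p * q = mscale c (p * q)"
  by (simp add: mscale_eq_mult mult.assoc)

lemma mult_mscale_right: "p * mscale c q = mscale c (p * (q :: 'a::field mpoly))"
  by (simp add: mscale_eq_mult mult.left_commute)

lemma keys_mscale_subset: "Poly_Mapping.keys (mscale c p) \<subseteq> Poly_Mapping.keys p"
  by (auto simp: in_keys_iff)

lemma mpoly_eq_sum_mmonoms:
  "p = (\<Sum>\<alpha>\<in>Poly_Mapping.keys p. mscale (Poly_Mapping.lookup p \<alpha>) (mmonom \<alpha>))"
proof (rule poly_mapping_eqI)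
  fix k
  have "Poly_Mapping.lookup (\<Sum>\<alpha>\<in>Poly_Mapping.keys p. mscale (Poly_Mapping.lookup p \<alpha>) (mmonom \<alpha>)) k
      = (\<Sum>\<alpha>\<in>Poly_Mapping.keys p. if \<alpha> = k then Poly_Mapping.lookup p \<alpha> else 0)"
    by (auto simp: lookup_sum mmonom_def lookup_single when_def intro!: sum.cong)
  also have "\<dots> = Poly_Mapping.lookup p k"
    by (simp add: in_keys_iff)
  finally show "Poly_Mapping.lookup p k =
      Poly_Mapping.lookup (\<Sum>\<alpha>\<in>Poly_Mapping.keys p. mscale (Poly_Mapping.lookup p \<alpha>) (mmonom \<alpha>)) k"
    by simp
qed

lemma mmonom_mult: "mmonom \<beta> * mmonom \<gamma> = (mmonom (\<beta> + \<gamma>) :: 'a::field mpoly)"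
  by (simp add: mmonom_def mult_single)

lemma mvar_eq_mmonom: "mvar k = mmonom (Poly_Mapping.single k 1)"
  by (simp add: mvar_def mmonom_def)

lemma inj_mmonom: "inj (mmonom :: _ \<Rightarrow> 'a::field mpoly)"
  by (rule injI) (metis mmonom_def lookup_single_eq lookup_single_not_eq zero_neq_one)

lemma independent_mmonoms: "mv.independent (mmonom ` E :: 'a::field mpoly set)"
  unfolding mv.independent_explicit_finite_subsets
proof (intro allI impI ballI)
  fix S u v
  assume S: "S \<subseteq> (mmonom ` E :: 'a mpoly set)" "finite S"
    and rel: "(\<Sum>v\<in>S. mscale (u v) v) = 0" and v: "v \<in> S"
  obtain \<alpha> where \<alpha>: "v = mmonom \<alpha>" using S v by auto
  have "0 = Poly_Mapping.lookup (\<Sum>v\<in>S. mscale (u v) v) \<alpha>" using rel by simp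
  also have "\<dots> = (\<Sum>w\<in>S. if w = v then u w else 0)"
  proof (unfold lookup_sum, rule sum.cong[OF refl])
    fix w assume "w \<in> S"
    then obtain \<beta> where \<beta>: "w = mmonom \<beta>" using S by auto
    then show "Poly_Mapping.lookup (mscale (u w) w) \<alpha> = (if w = v then u w else 0)"
      using inj_mmonom[THEN injD, of \<beta> \<alpha>]
      by (auto simp: \<alpha> mmonom_def lookup_single when_def)
  qed
  also have "\<dots> = u v" using S(2) v by simp
  finally show "u v = 0" by simp
qed

abbreviation mlinear :: "('a::field mpoly \<Rightarrow> 'a mpoly) \<Rightarrow> bool" where
  "mlinear F \<equiv> module_hom mscale mscale F"

lemma mlinearI:
  assumes "\<And>p q. F (p + q) = F p + F q" "\<And>c p. F (mscale c p) = mscale c (F p)"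
  shows "mlinear F"
  using assms vector_space_mscale by (simp add: module_hom_iff module_iff_vector_space)

lemma mlinear_comp: "mlinear F \<Longrightarrow> mlinear G \<Longrightarrow> mlinear (\<lambda>x. F (G x))"
  by (rule mlinearI) (simp_all add: module_hom.add module_hom.scale)

lemma mlinear_eqI:
  assumes "mlinear F" "mlinear G" "\<And>\<alpha>. F (mmonom \<alpha>) = G (mmonom \<alpha>)"
  shows "F p = G p"
proof -
  have "F p = F (\<Sum>\<alpha>\<in>Poly_Mapping.keys p. mscale (Poly_Mapping.lookup p \<alpha>) (mmonom \<alpha>))"
    by (subst mpoly_eq_sum_mmonoms, rule refl)
  also have "\<dots> = G (\<Sum>\<alpha>\<in>Poly_Mapping.keys p. mscale (Poly_Mapping.lookup p \<alpha>) (mmonom \<alpha>))"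
    using assms by (simp add: module_hom.sum module_hom.scale)
  also have "\<dots> = G p" by (subst (2) mpoly_eq_sum_mmonoms, rule refl)
  finally show ?thesis .
qed

definition apolar_term ::
    "'a::field mpoly \<Rightarrow> 'a mpoly \<Rightarrow> (nat \<Rightarrow>\<^sub>0 nat) \<Rightarrow> (nat \<Rightarrow>\<^sub>0 nat) \<Rightarrow> 'a mpoly" where
  "apolar_term \<theta> f \<beta> \<alpha> = (if mdvd \<beta> \<alpha>
      then Poly_Mapping.single (\<alpha> - \<beta>)
             (Poly_Mapping.lookup \<theta> \<beta> * Poly_Mapping.lookup f \<alpha> * of_nat (mon_diff_coeff \<beta> \<alpha>))
      else 0)"

lemma apolar_eq_sum_over:
  assumes "finite B" "Poly_Mapping.keys \<theta> \<subseteq> B" "finite A" "Poly_Mapping.keys f \<subseteq> A"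
  shows "apolar \<theta> f = (\<Sum>\<beta>\<in>B. \<Sum>\<alpha>\<in>A. apolar_term \<theta> f \<beta> \<alpha>)"
proof -
  have vanish: "apolar_term \<theta> f \<beta> \<alpha> = 0"
    if "\<beta> \<notin> Poly_Mapping.keys \<theta> \<or> \<alpha> \<notin> Poly_Mapping.keys f" for \<beta> \<alpha>
    using that by (auto simp: apolar_term_def in_keys_iff)
  have "apolar \<theta> f = (\<Sum>\<beta>\<in>Poly_Mapping.keys \<theta>. \<Sum>\<alpha>\<in>Poly_Mapping.keys f. apolar_term \<theta> f \<beta> \<alpha>)"
    by (simp add: apolar_def apolar_term_def)
  also have "\<dots> = (\<Sum>\<beta>\<in>Poly_Mapping.keys \<theta>. \<Sum>\<alpha>\<in>A. apolar_term \<theta> f \<beta> \<alpha>)"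
    using assms by (intro sum.cong refl sum.mono_neutral_left) (auto simp: vanish)
  also have "\<dots> = (\<Sum>\<beta>\<in>B. \<Sum>\<alpha>\<in>A. apolar_term \<theta> f \<beta> \<alpha>)"
    using assms by (intro sum.mono_neutral_left) (auto simp: vanish)
  finally show ?thesis .
qed

lemma apolar_add_left: "apolar (\<theta>1 + \<theta>2) f = apolar \<theta>1 f + apolar \<theta>2 f"
proof -
  let ?B = "Poly_Mapping.keys \<theta>1 \<union> Poly_Mapping.keys \<theta>2" and ?A = "Poly_Mapping.keys f"
  have "apolar_term (\<theta>1 + \<theta>2) f \<beta> \<alpha> = apolar_term \<theta>1 f \<beta> \<alpha> + apolar_term \<theta>2 f \<beta> \<alpha>" for \<beta> \<alpha>
    by (simp add: apolar_term_def lookup_add distrib_right single_add)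
  then have "apolar (\<theta>1 + \<theta>2) f =
      (\<Sum>\<beta>\<in>?B. \<Sum>\<alpha>\<in>?A. apolar_term \<theta>1 f \<beta> \<alpha>) + (\<Sum>\<beta>\<in>?B. \<Sum>\<alpha>\<in>?A. apolar_term \<theta>2 f \<beta> \<alpha>)"
    using keys_add[of \<theta>1 \<theta>2] by (subst apolar_eq_sum_over[of ?B _ ?A]) (auto simp: sum.distrib)
  also have "\<dots> = apolar \<theta>1 f + apolar \<theta>2 f"
    by (subst (1 2) apolar_eq_sum_over[of ?B _ ?A]) auto
  finally show ?thesis .
qed

lemma apolar_add_right: "apolar \<theta> (f1 + f2) = apolar \<theta> f1 + apolar \<theta> f2"
proof -
  let ?B = "Poly_Mapping.keys \<theta>" and ?A = "Poly_Mapping.keys f1 \<union> Poly_Mapping.keys f2"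
  have "apolar_term \<theta> (f1 + f2) \<beta> \<alpha> = apolar_term \<theta> f1 \<beta> \<alpha> + apolar_term \<theta> f2 \<beta> \<alpha>" for \<beta> \<alpha>
    by (simp add: apolar_term_def lookup_add distrib_right distrib_left single_add)
  then have "apolar \<theta> (f1 + f2) =
      (\<Sum>\<beta>\<in>?B. \<Sum>\<alpha>\<in>?A. apolar_term \<theta> f1 \<beta> \<alpha>) + (\<Sum>\<beta>\<in>?B. \<Sum>\<alpha>\<in>?A. apolar_term \<theta> f2 \<beta> \<alpha>)"
    using keys_add[of f1 f2] by (subst apolar_eq_sum_over[of ?B _ ?A]) (auto simp: sum.distrib)
  also have "\<dots> = apolar \<theta> f1 + apolar \<theta> f2"
    by (subst (1 2) apolar_eq_sum_over[of ?B _ ?A]) auto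
  finally show ?thesis .
qed

lemma apolar_scale_left: "apolar (mscale c \<theta>) f = mscale c (apolar \<theta> f)"
proof -
  have "apolar_term (mscale c \<theta>) f \<beta> \<alpha> = mscale c (apolar_term \<theta> f \<beta> \<alpha>)" for \<beta> \<alpha>
    by (simp add: apolar_term_def mult.assoc)
  then have "apolar (mscale c \<theta>) f =
      mscale c (\<Sum>\<beta>\<in>Poly_Mapping.keys \<theta>. \<Sum>\<alpha>\<in>Poly_Mapping.keys f. apolar_term \<theta> f \<beta> \<alpha>)"
    using keys_mscale_subset[of c \<theta>]
    by (subst apolar_eq_sum_over[of "Poly_Mapping.keys \<theta>" _ "Poly_Mapping.keys f"])
       (auto simp: mv.scale_sum_right)
  then show ?thesis by (simp add: apolar_def apolar_term_def)
qed

lemma apolar_scale_right: "apolar \<theta> (mscale c f) = mscale c (apolar \<theta> f)"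
proof -
  have "apolar_term \<theta> (mscale c f) \<beta> \<alpha> = mscale c (apolar_term \<theta> f \<beta> \<alpha>)" for \<beta> \<alpha>
    by (simp add: apolar_term_def mult.assoc mult.left_commute)
  then have "apolar \<theta> (mscale c f) =
      mscale c (\<Sum>\<beta>\<in>Poly_Mapping.keys \<theta>. \<Sum>\<alpha>\<in>Poly_Mapping.keys f. apolar_term \<theta> f \<beta> \<alpha>)"
    using keys_mscale_subset[of c f]
    by (subst apolar_eq_sum_over[of "Poly_Mapping.keys \<theta>" _ "Poly_Mapping.keys f"])
       (auto simp: mv.scale_sum_right)
  then show ?thesis by (simp add: apolar_def apolar_term_def)
qed

lemma mlinear_apolar_right: "mlinear (apolar \<theta>)"
  by (rule mlinearI) (simp_all add: apolar_add_right apolar_scale_right)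

lemma mlinear_apolar_left: "mlinear (\<lambda>\<theta>. apolar \<theta> f)"
  by (rule mlinearI) (simp_all add: apolar_add_left apolar_scale_left)

lemma apolar_zero_right [simp]: "apolar \<theta> 0 = 0"
  by (rule module_hom.zero[OF mlinear_apolar_right])

lemma apolar_diff_left: "apolar (\<theta>1 - \<theta>2) f = apolar \<theta>1 f - apolar \<theta>2 f"
  by (rule module_hom.diff[OF mlinear_apolar_left])

lemma apolar_sum_left: "apolar (sum g A) f = (\<Sum>x\<in>A. apolar (g x) f)"
  using module_hom.sum[OF mlinear_apolar_left] by simp

lemma apolar_eq_sum_mmonoms_left:
  "apolar \<theta> f = (\<Sum>\<beta>\<in>Poly_Mapping.keys \<theta>. mscale (Poly_Mapping.lookup \<theta> \<beta>) (apolar (mmonom \<beta>) f))"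
  by (subst mpoly_eq_sum_mmonoms)
     (simp add: module_hom.sum[OF mlinear_apolar_left] module_hom.scale[OF mlinear_apolar_left])

lemma apolar_eq_sum_mmonoms_right:
  "apolar \<theta> f = (\<Sum>\<alpha>\<in>Poly_Mapping.keys f. mscale (Poly_Mapping.lookup f \<alpha>) (apolar \<theta> (mmonom \<alpha>)))"
  by (subst mpoly_eq_sum_mmonoms)
     (simp add: module_hom.sum[OF mlinear_apolar_right] module_hom.scale[OF mlinear_apolar_right])

lemma apolar_mmonom: "apolar (mmonom \<beta>) (mmonom \<alpha> :: 'a::field mpoly) =
   (if mdvd \<beta> \<alpha> then mscale (of_nat (mon_diff_coeff \<beta> \<alpha>)) (mmonom (\<alpha> - \<beta>)) else 0)"
  unfolding apolar_def mmonom_def by (simp only: keys_single) simp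

lemma apolar_mmonom_dvd:
  "mdvd \<beta> \<alpha> \<Longrightarrow> apolar (mmonom \<beta>) (mmonom \<alpha> :: 'a::field mpoly) =
     mscale (of_nat (mon_diff_coeff \<beta> \<alpha>)) (mmonom (\<alpha> - \<beta>))"
  by (simp add: apolar_mmonom)

lemma apolar_mmonom_not_dvd:
  "\<not> mdvd \<beta> \<alpha> \<Longrightarrow> apolar (mmonom \<beta>) (mmonom \<alpha> :: 'a::field mpoly) = 0"
  by (simp only: apolar_mmonom if_False)

lemma mon_diff_coeff_eq_prod_over:
  assumes "finite K" "Poly_Mapping.keys \<alpha> \<subseteq> K"
  shows "mon_diff_coeff \<beta> \<alpha> = (\<Prod>k\<in>K. fact (Poly_Mapping.lookup \<alpha> k)
           div fact (Poly_Mapping.lookup \<alpha> k - Poly_Mapping.lookup \<beta> k))"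
  unfolding mon_diff_coeff_def
  by (rule prod.mono_neutral_left) (use assms in \<open>auto simp: in_keys_iff\<close>)

lemma fact_div_fact_mult:
  fixes a b c :: nat
  assumes "c \<le> b" "b \<le> a"
  shows "fact a div fact b * (fact b div fact c) = (fact a div fact c :: nat)"
proof -
  have "fact a div fact b * (fact b div fact c) = (fact a * fact b div (fact b * fact c) :: nat)"
    using assms by (intro div_mult_div_if_dvd fact_dvd)
  also have "\<dots> = fact a div fact c" by simp
  finally show ?thesis .
qed

lemma mon_diff_coeff_add:
  "mon_diff_coeff (\<beta> + \<gamma>) \<alpha> = mon_diff_coeff \<gamma> \<alpha> * mon_diff_coeff \<beta> (\<alpha> - \<gamma>)"
proof -
  let ?K = "Poly_Mapping.keys \<alpha>" and ?a = "Poly_Mapping.lookup \<alpha>"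
    and ?b = "Poly_Mapping.lookup \<beta>" and ?g = "Poly_Mapping.lookup \<gamma>"
  have "Poly_Mapping.keys (\<alpha> - \<gamma>) \<subseteq> ?K"
    by (auto simp: in_keys_iff lookup_minus)
  then have "mon_diff_coeff \<gamma> \<alpha> * mon_diff_coeff \<beta> (\<alpha> - \<gamma>) =
      (\<Prod>k\<in>?K. fact (?a k) div fact (?a k - ?g k) * (fact (?a k - ?g k) div fact (?a k - ?g k - ?b k)))"
    by (simp add: mon_diff_coeff_eq_prod_over[of ?K] lookup_minus prod.distrib)
  also have "\<dots> = (\<Prod>k\<in>?K. fact (?a k) div fact (?a k - ?g k - ?b k))"
    by (simp add: fact_div_fact_mult)
  also have "\<dots> = mon_diff_coeff (\<beta> + \<gamma>) \<alpha>"
    by (simp add: mon_diff_coeff_eq_prod_over[of ?K] lookup_add add.commute)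
  finally show ?thesis by simp
qed

lemma apolar_mmonom_mult:
  "apolar (mmonom \<beta> * mmonom \<gamma>) (mmonom \<alpha> :: 'a::field mpoly) =
   apolar (mmonom \<beta>) (apolar (mmonom \<gamma>) (mmonom \<alpha>))"
proof -
  have "(b + g \<le> (a::nat)) = (g \<le> a \<and> b \<le> a - g)" for a b g by arith
  then have dvd_iff: "mdvd (\<beta> + \<gamma>) \<alpha> \<longleftrightarrow> mdvd \<gamma> \<alpha> \<and> mdvd \<beta> (\<alpha> - \<gamma>)"
    by (simp add: lookup_add lookup_minus all_conj_distrib)
  have "\<alpha> - (\<beta> + \<gamma>) = \<alpha> - \<gamma> - \<beta>"
    by (rule poly_mapping_eqI) (simp add: lookup_add lookup_minus)
  then show ?thesis
    using dvd_iff
    by (auto simp: mmonom_mult apolar_mmonom apolar_scale_right mon_diff_coeff_add mult.commute)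
qed

lemma apolar_mult: "apolar (\<theta> * \<eta>) f = apolar \<theta> (apolar \<eta> (f :: 'a::field mpoly))"
proof -
  have on_mmonoms: "apolar (mmonom \<beta> * mmonom \<gamma>) g = apolar (mmonom \<beta>) (apolar (mmonom \<gamma>) g)"
    for \<beta> \<gamma> and g :: "'a mpoly"
    by (rule mlinear_eqI[OF mlinear_apolar_right mlinear_comp[OF mlinear_apolar_right mlinear_apolar_right]])
       (rule apolar_mmonom_mult)
  have on_mmonom: "apolar (mmonom \<beta> * e) g = apolar (mmonom \<beta>) (apolar e g)" for \<beta> and e g :: "'a mpoly"
  proof (rule mlinear_eqI[of "\<lambda>e. apolar (mmonom \<beta> * e) g"])
    show "mlinear (\<lambda>e. apolar (mmonom \<beta> * e) g)"
      by (rule mlinearI) (simp_all add: distrib_left apolar_add_left mult_mscale_right apolar_scale_left)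
    show "mlinear (\<lambda>e. apolar (mmonom \<beta>) (apolar e g))"
      by (rule mlinear_comp[OF mlinear_apolar_right mlinear_apolar_left])
  qed (rule on_mmonoms)
  show ?thesis
  proof (rule mlinear_eqI[of "\<lambda>t. apolar (t * \<eta>) f" "\<lambda>t. apolar t (apolar \<eta> f)"])
    show "mlinear (\<lambda>t. apolar (t * \<eta>) f)"
      by (rule mlinearI) (simp_all add: distrib_right apolar_add_left mult_mscale_left apolar_scale_left)
  qed (rule mlinear_apolar_left, rule on_mmonom)
qed

section \<open>Degrees and homogeneous forms\<close>

lemma mon_deg_eq_sum_over:
  assumes "finite K" "Poly_Mapping.keys \<alpha> \<subseteq> K"
  shows "mon_deg \<alpha> = (\<Sum>k\<in>K. Poly_Mapping.lookup \<alpha> k)"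
  unfolding mon_deg_def
  by (rule sum.mono_neutral_left) (use assms in \<open>auto simp: in_keys_iff\<close>)

lemma keys_add_exponents:
  "Poly_Mapping.keys (\<alpha> + \<beta>) = Poly_Mapping.keys \<alpha> \<union> Poly_Mapping.keys (\<beta> :: nat \<Rightarrow>\<^sub>0 nat)"
  by (auto simp: in_keys_iff lookup_add)

lemma keys_diff_exponents_subset:
  "Poly_Mapping.keys (\<alpha> - \<beta>) \<subseteq> Poly_Mapping.keys (\<alpha> :: nat \<Rightarrow>\<^sub>0 nat)"
  by (auto simp: in_keys_iff lookup_minus)

lemma mon_deg_add: "mon_deg (\<alpha> + \<beta>) = mon_deg \<alpha> + mon_deg \<beta>"
  by (simp add: mon_deg_eq_sum_over[of "Poly_Mapping.keys \<alpha> \<union> Poly_Mapping.keys \<beta>"]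
      keys_add_exponents lookup_add sum.distrib)

lemma mon_deg_single: "mon_deg (Poly_Mapping.single k a) = a"
  by (simp add: mon_deg_def)

lemma mon_deg_diff:
  assumes "mdvd \<beta> \<alpha>"
  shows "mon_deg (\<alpha> - \<beta>) = mon_deg \<alpha> - mon_deg \<beta>"
proof -
  let ?K = "Poly_Mapping.keys \<alpha>"
  have "Poly_Mapping.keys \<beta> \<subseteq> ?K"
  proof
    fix x assume "x \<in> Poly_Mapping.keys \<beta>"
    then show "x \<in> ?K" using assms[rule_format, of x] by (metis in_keys_iff le_zero_eq)
  qed
  then show ?thesis
    using assms keys_diff_exponents_subset[of \<alpha> \<beta>]
    by (simp add: mon_deg_eq_sum_over[of ?K] lookup_minus sum_subtractf_nat)
qed

lemma lookup_le_mon_deg: "Poly_Mapping.lookup \<alpha> k \<le> mon_deg \<alpha>"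
proof (cases "k \<in> Poly_Mapping.keys \<alpha>")
  case True
  then show ?thesis unfolding mon_deg_def by (rule member_le_sum) auto
next
  case False
  then show ?thesis by (simp add: in_keys_iff)
qed

lemma mon_deg_eq_0_iff: "mon_deg \<alpha> = 0 \<longleftrightarrow> \<alpha> = 0"
proof
  assume "mon_deg \<alpha> = 0"
  then have "Poly_Mapping.lookup \<alpha> k = 0" for k using lookup_le_mon_deg[of \<alpha> k] by simp
  then show "\<alpha> = 0" by (simp add: poly_mapping_eq_iff fun_eq_iff)
qed (simp add: mon_deg_def)

lemma forms_add: "p \<in> forms V i \<Longrightarrow> q \<in> forms V i \<Longrightarrow> p + q \<in> forms V i"
  unfolding forms_def by (auto dest: subsetD[OF keys_add])

lemma forms_scale: "p \<in> forms V i \<Longrightarrow> mscale c p \<in> forms V i"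
  unfolding forms_def by (auto dest: subsetD[OF keys_mscale_subset])

lemma zero_in_forms: "0 \<in> forms V i"
  by (simp add: forms_def)

lemma subspace_forms: "mv.subspace (forms V i :: 'a::field mpoly set)"
  by (rule mv.subspaceI[OF zero_in_forms forms_add forms_scale])

lemma forms_sum: "(\<And>x. x \<in> A \<Longrightarrow> g x \<in> forms V i) \<Longrightarrow> sum g A \<in> forms V i"
  using mv.subspace_sum[OF subspace_forms, of A g V i] by simp

lemma forms_diff: "p \<in> forms V i \<Longrightarrow> q \<in> forms V i \<Longrightarrow> p - q \<in> forms V i"
  using mv.subspace_diff[OF subspace_forms, of p V i q] by simp

lemma keys_forms:
  "p \<in> forms V i \<Longrightarrow> \<alpha> \<in> Poly_Mapping.keys p \<Longrightarrow> Poly_Mapping.keys \<alpha> \<subseteq> V \<and> mon_deg \<alpha> = i"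
  by (simp add: forms_def)

lemma mmonom_in_forms_iff:
  "(mmonom \<alpha> :: 'a::field mpoly) \<in> forms V i \<longleftrightarrow> Poly_Mapping.keys \<alpha> \<subseteq> V \<and> mon_deg \<alpha> = i"
  unfolding forms_def mmonom_def by (simp only: mem_Collect_eq keys_single) simp

lemma mvar_in_forms: "t \<in> V \<Longrightarrow> (mvar t :: 'a::field mpoly) \<in> forms V 1"
  by (simp add: mvar_eq_mmonom mmonom_in_forms_iff mon_deg_single)

lemma forms_mult:
  assumes p: "p \<in> forms V a" and q: "q \<in> forms V b"
  shows "p * q \<in> forms V (a + b)"
  unfolding forms_def
proof (intro CollectI ballI)
  fix \<gamma> assume "\<gamma> \<in> Poly_Mapping.keys (p * q)"
  then obtain \<alpha> \<beta> where "\<gamma> = \<alpha> + \<beta>" "\<alpha> \<in> Poly_Mapping.keys p" "\<beta> \<in> Poly_Mapping.keys q"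
    using keys_mult by blast
  then show "Poly_Mapping.keys \<gamma> \<subseteq> V \<and> mon_deg \<gamma> = a + b"
    using keys_forms[OF p] keys_forms[OF q] by (auto simp: keys_add_exponents mon_deg_add)
qed

lemma forms_subset_polys_in: "forms V i \<subseteq> polys_in V"
  by (auto simp: forms_def polys_in_def)

lemma forms_subset_span_mmonoms:
  "forms V i \<subseteq> mv.span (mmonom ` {\<alpha>. Poly_Mapping.keys \<alpha> \<subseteq> V \<and> mon_deg \<alpha> = i})"
proof
  fix p :: "'a mpoly" assume p: "p \<in> forms V i"
  have "(\<Sum>\<alpha>\<in>Poly_Mapping.keys p. mscale (Poly_Mapping.lookup p \<alpha>) (mmonom \<alpha>))
     \<in> mv.span (mmonom ` {\<alpha>. Poly_Mapping.keys \<alpha> \<subseteq> V \<and> mon_deg \<alpha> = i})"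
    using keys_forms[OF p] by (intro mv.span_sum mv.span_scale mv.span_base) auto
  then show "p \<in> mv.span (mmonom ` {\<alpha>. Poly_Mapping.keys \<alpha> \<subseteq> V \<and> mon_deg \<alpha> = i})"
    by (subst mpoly_eq_sum_mmonoms)
qed

lemma finite_exponents_of_degree:
  assumes "finite V"
  shows "finite {\<alpha>::nat \<Rightarrow>\<^sub>0 nat. Poly_Mapping.keys \<alpha> \<subseteq> V \<and> mon_deg \<alpha> = i}"
proof -
  let ?E = "{\<alpha>::nat \<Rightarrow>\<^sub>0 nat. Poly_Mapping.keys \<alpha> \<subseteq> V \<and> mon_deg \<alpha> = i}"
  let ?r = "\<lambda>\<alpha>. restrict (Poly_Mapping.lookup \<alpha>) V"
  have "inj_on ?r ?E"
  proof (rule inj_onI)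
    fix \<alpha> \<beta> assume a: "\<alpha> \<in> ?E" "\<beta> \<in> ?E" "?r \<alpha> = ?r \<beta>"
    have "Poly_Mapping.lookup \<alpha> k = Poly_Mapping.lookup \<beta> k" for k
    proof (cases "k \<in> V")
      case True
      then show ?thesis using fun_cong[OF a(3), of k] by simp
    next
      case False
      then have "k \<notin> Poly_Mapping.keys \<alpha>" "k \<notin> Poly_Mapping.keys \<beta>" using a by auto
      then show ?thesis by (simp add: in_keys_iff)
    qed
    then show "\<alpha> = \<beta>" by (simp add: poly_mapping_eq_iff fun_eq_iff)
  qed
  moreover have "?r ` ?E \<subseteq> (\<Pi>\<^sub>E k\<in>V. {..i})"
    using lookup_le_mon_deg by (auto simp: PiE_iff)
  moreover have "finite (\<Pi>\<^sub>E k\<in>V. {..i})" using assms by (intro finite_PiE) auto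
  ultimately show ?thesis using finite_image_iff finite_subset by blast
qed

section \<open>Forms in \<open>u, v\<close>\<close>

definition x_degree :: "nat \<Rightarrow> (nat \<Rightarrow>\<^sub>0 nat) \<Rightarrow> nat" where
  "x_degree n \<alpha> = (\<Sum>j\<le>n. Poly_Mapping.lookup \<alpha> j)"

definition uv_exponents :: "nat \<Rightarrow> nat \<Rightarrow> (nat \<Rightarrow>\<^sub>0 nat) set" where
  "uv_exponents n m =
     (\<lambda>a. Poly_Mapping.single (n+1) a + Poly_Mapping.single (n+2) (m - a)) ` {..m}"

lemma x_degree_add: "x_degree n (\<alpha> + \<beta>) = x_degree n \<alpha> + x_degree n \<beta>"
  by (simp add: x_degree_def lookup_add sum.distrib)

lemma x_degree_single: "x_degree n (Poly_Mapping.single t 1) = (if t \<le> n then 1 else 0)"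
  by (simp add: x_degree_def lookup_single when_def)

lemma x_degree_mono: "mdvd \<beta> \<alpha> \<Longrightarrow> x_degree n \<beta> \<le> x_degree n \<alpha>"
  unfolding x_degree_def by (rule sum_mono) simp

lemma keys_subset_uv_iff:
  assumes "Poly_Mapping.keys \<beta> \<subseteq> {..n+2}"
  shows "Poly_Mapping.keys \<beta> \<subseteq> {n+1, n+2} \<longleftrightarrow> x_degree n \<beta> = 0"
proof -
  have "k \<in> {n+1, n+2} \<longleftrightarrow> \<not> k \<le> n" if "k \<in> Poly_Mapping.keys \<beta>" for k
    using that assms by auto
  then have "Poly_Mapping.keys \<beta> \<subseteq> {n+1, n+2} \<longleftrightarrow> (\<forall>j\<le>n. j \<notin> Poly_Mapping.keys \<beta>)"
    by blast
  also have "\<dots> \<longleftrightarrow> x_degree n \<beta> = 0"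
    by (auto simp: x_degree_def in_keys_iff)
  finally show ?thesis .
qed

lemma finite_uv_exponents: "finite (uv_exponents n m)"
  by (simp add: uv_exponents_def)

lemma card_uv_exponents: "card (uv_exponents n m) = m + 1"
proof -
  have "inj_on (\<lambda>a. Poly_Mapping.single (n+1) a + Poly_Mapping.single (n+2) (m - a)) {..m}"
  proof (rule inj_onI)
    fix a b
    assume "Poly_Mapping.single (n+1) a + Poly_Mapping.single (n+2) (m - a)
       = Poly_Mapping.single (n+1) b + Poly_Mapping.single (n+2) (m - b)"
    then have "Poly_Mapping.lookup (Poly_Mapping.single (n+1) a + Poly_Mapping.single (n+2) (m - a)) (n+1)
       = Poly_Mapping.lookup (Poly_Mapping.single (n+1) b + Poly_Mapping.single (n+2) (m - b)) (n+1)"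
      by simp
    then show "a = b" by (simp add: lookup_add lookup_single)
  qed
  then show ?thesis by (simp add: uv_exponents_def card_image)
qed

lemma mem_uv_exponents_iff:
  "\<alpha> \<in> uv_exponents n m \<longleftrightarrow> Poly_Mapping.keys \<alpha> \<subseteq> {n+1, n+2} \<and> mon_deg \<alpha> = m"
proof
  assume "\<alpha> \<in> uv_exponents n m"
  then obtain a where "a \<le> m" "\<alpha> = Poly_Mapping.single (n+1) a + Poly_Mapping.single (n+2) (m - a)"
    by (auto simp: uv_exponents_def)
  then show "Poly_Mapping.keys \<alpha> \<subseteq> {n+1, n+2} \<and> mon_deg \<alpha> = m"
    by (simp add: keys_add_exponents mon_deg_add mon_deg_single)
next
  assume \<alpha>: "Poly_Mapping.keys \<alpha> \<subseteq> {n+1, n+2} \<and> mon_deg \<alpha> = m"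
  let ?a = "Poly_Mapping.lookup \<alpha> (n+1)"
  have deg: "m = ?a + Poly_Mapping.lookup \<alpha> (n+2)"
    using mon_deg_eq_sum_over[of "{n+1, n+2}" \<alpha>] \<alpha> by simp
  have "\<alpha> = Poly_Mapping.single (n+1) ?a + Poly_Mapping.single (n+2) (m - ?a)"
  proof (rule poly_mapping_eqI)
    fix k
    show "Poly_Mapping.lookup \<alpha> k =
        Poly_Mapping.lookup (Poly_Mapping.single (n+1) ?a + Poly_Mapping.single (n+2) (m - ?a)) k"
    proof (cases "k = n+1 \<or> k = n+2")
      case True
      then show ?thesis using deg by (auto simp: lookup_add lookup_single)
    next
      case False
      then have "k \<notin> Poly_Mapping.keys \<alpha>" using \<alpha> by blast
      then show ?thesis using False by (simp add: lookup_add lookup_single in_keys_iff)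
    qed
  qed
  moreover have "?a \<le> m" using deg by simp
  ultimately show "\<alpha> \<in> uv_exponents n m" unfolding uv_exponents_def by blast
qed

lemma uv_forms_subset_span: "forms {n+1, n+2} m \<subseteq> mv.span (mmonom ` uv_exponents n m :: 'a::field mpoly set)"
proof -
  have "{\<alpha>. Poly_Mapping.keys \<alpha> \<subseteq> {n+1, n+2} \<and> mon_deg \<alpha> = m} = uv_exponents n m"
    by (auto simp: mem_uv_exponents_iff)
  then show ?thesis using forms_subset_span_mmonoms[of "{n+1, n+2}" m] by simp
qed

lemma dim_uv_forms: "mv.dim (forms {n+1, n+2} m :: 'a::field mpoly set) = m + 1"
proof -
  have "mmonom ` uv_exponents n m \<subseteq> (forms {n+1, n+2} m :: 'a mpoly set)"
    by (auto simp: mmonom_in_forms_iff mem_uv_exponents_iff)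
  then have "card (mmonom ` uv_exponents n m :: 'a mpoly set) = mv.dim (forms {n+1, n+2} m :: 'a mpoly set)"
    by (rule mv.basis_card_eq_dim[OF _ uv_forms_subset_span independent_mmonoms])
  moreover have "card (mmonom ` uv_exponents n m :: 'a mpoly set) = m + 1"
    by (simp add: card_image[OF inj_on_subset[OF inj_mmonom]] card_uv_exponents)
  ultimately show ?thesis by simp
qed

lemma apolar_mem_forms:
  assumes \<theta>: "\<theta> \<in> forms V k" and p: "p \<in> forms W m"
  shows "apolar \<theta> p \<in> forms W (m - k)"
proof -
  have mmonoms: "apolar (mmonom \<beta>) (mmonom \<alpha>) \<in> forms W (m - k)"
    if "\<beta> \<in> Poly_Mapping.keys \<theta>" "\<alpha> \<in> Poly_Mapping.keys p" for \<beta> \<alpha>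
  proof (cases "mdvd \<beta> \<alpha>")
    case True
    have "Poly_Mapping.keys (\<alpha> - \<beta>) \<subseteq> W"
      using keys_diff_exponents_subset keys_forms[OF p that(2)] by blast
    moreover have "mon_deg (\<alpha> - \<beta>) = m - k"
      using mon_deg_diff[OF True] keys_forms[OF \<theta> that(1)] keys_forms[OF p that(2)] by simp
    ultimately have "mmonom (\<alpha> - \<beta>) \<in> forms W (m - k)"
      by (simp add: mmonom_in_forms_iff)
    then show ?thesis unfolding apolar_mmonom_dvd[OF True] by (rule forms_scale)
  qed (simp add: apolar_mmonom_not_dvd zero_in_forms)
  have "apolar (mmonom \<beta>) p \<in> forms W (m - k)" if "\<beta> \<in> Poly_Mapping.keys \<theta>" for \<beta>
    using mmonoms[OF that] by (subst apolar_eq_sum_mmonoms_right) (intro forms_sum forms_scale)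
  then show ?thesis
    by (subst apolar_eq_sum_mmonoms_left) (intro forms_sum forms_scale)
qed

lemma apolar_const_eq_0:
  assumes "\<theta> \<in> forms V k" "0 < k"
  shows "apolar \<theta> (mmonom 0) = 0"
proof -
  have "apolar (mmonom \<beta>) (mmonom 0) = (0 :: 'a mpoly)" if "\<beta> \<in> Poly_Mapping.keys \<theta>" for \<beta>
  proof (rule apolar_mmonom_not_dvd)
    show "\<not> mdvd \<beta> 0"
    proof
      assume "mdvd \<beta> 0"
      then have "\<beta> = 0" by (intro poly_mapping_eqI) simp
      then show False using keys_forms[OF assms(1) that] assms(2) by (simp add: mon_deg_def)
    qed
  qed
  then show ?thesis
    by (subst apolar_eq_sum_mmonoms_left) (simp add: sum.neutral)
qed

lemma exists_uv_form_annihilated: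
  assumes l: "l \<in> forms V 1"
  shows "\<exists>w\<in>forms {n+1, n+2} m. w \<noteq> 0 \<and> apolar l w = 0"
proof (cases "m = 0")
  case True
  have "mmonom 0 \<in> (forms {n+1, n+2} m :: 'a mpoly set)"
    using True by (simp add: mmonom_in_forms_iff mon_deg_def)
  moreover have "mmonom 0 \<noteq> (0 :: 'a mpoly)" by (simp add: mmonom_def)
  moreover have "apolar l (mmonom 0) = 0" by (rule apolar_const_eq_0[OF l]) simp
  ultimately show ?thesis by blast
next
  case False
  let ?W = "forms {n+1, n+2} m :: 'a mpoly set"
  let ?K = "{w\<in>?W. apolar l w = 0}"
  have rank_nullity: "mv.dim ?W = mv.dim ?K + mv.dim (apolar l ` ?W)"
    using mlinear_apolar_right[of l]
    by (intro vector_space_pair.dim_eq_dim_kernel_add_dim_image[OF vector_space_pair_mscale _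
          subspace_forms _ uv_forms_subset_span])
       (simp_all add: module_hom_iff_linear finite_uv_exponents)
  have "apolar l ` ?W \<subseteq> mv.span (mmonom ` uv_exponents n (m - 1))"
    using apolar_mem_forms[OF l] uv_forms_subset_span by blast
  then have "mv.dim (apolar l ` ?W) \<le> card (mmonom ` uv_exponents n (m - 1) :: 'a mpoly set)"
    by (rule mv.dim_le_card) (simp add: finite_uv_exponents)
  also have "\<dots> = m"
    using False by (simp add: card_image[OF inj_on_subset[OF inj_mmonom]] card_uv_exponents)
  finally have "mv.dim (apolar l ` ?W) \<le> m" .
  moreover have "mv.dim ?W = m + 1" by (rule dim_uv_forms)
  ultimately have "mv.dim ?K \<noteq> 0"
    using rank_nullity by linarith
  have "\<not> ?K \<subseteq> {0}"
  proof
    assume "?K \<subseteq> {0}"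
    then have "mv.dim ?K \<le> card ({} :: 'a mpoly set)"
      by (intro mv.dim_le_card) (auto simp: mv.span_empty)
    then show False using \<open>mv.dim ?K \<noteq> 0\<close> by simp
  qed
  then show ?thesis by auto
qed

section \<open>Perazzo forms\<close>

text \<open>This is all the argument uses of a Perazzo form: neither the linear independence nor the
  algebraic dependence of the \<open>p\<^sub>i\<close> plays a role, nor do \<open>n \<ge> 2\<close>, the characteristic and the
  algebraic closedness of the field; of \<open>d \<ge> n + 1\<close> only \<open>d \<ge> 1\<close> is needed.\<close>

definition perazzo_shape :: "nat \<Rightarrow> nat \<Rightarrow> 'a::field mpoly \<Rightarrow> bool" where
  "perazzo_shape n d f \<longleftrightarrow> (\<forall>\<alpha>\<in>Poly_Mapping.keys f.
     Poly_Mapping.keys \<alpha> \<subseteq> {..n+2} \<and> mon_deg \<alpha> = d \<and> x_degree n \<alpha> \<le> 1)"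

lemma perazzo_form_imp_perazzo_shape:
  assumes "perazzo_form n d f" "1 \<le> d"
  shows "perazzo_shape n d f"
  unfolding perazzo_shape_def
proof
  fix \<alpha> assume \<alpha>: "\<alpha> \<in> Poly_Mapping.keys f"
  obtain p g where p: "\<forall>i\<le>n. p i \<in> forms {n+1, n+2} (d - 1)" and g: "g \<in> forms {n+1, n+2} d"
    and f: "f = (\<Sum>i\<le>n. mvar i * p i) + g"
    using assms(1) unfolding perazzo_form_def by blast
  have uv: "x_degree n \<gamma> = 0" if "Poly_Mapping.keys \<gamma> \<subseteq> {n+1, n+2}" for \<gamma>
  proof -
    have "Poly_Mapping.keys \<gamma> \<subseteq> {..n+2}" using that by auto
    then show ?thesis using keys_subset_uv_iff that by blast
  qed
  consider "\<alpha> \<in> Poly_Mapping.keys (\<Sum>i\<le>n. mvar i * p i)" | "\<alpha> \<in> Poly_Mapping.keys g"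
    using subsetD[OF keys_add \<alpha>[unfolded f]] by blast
  then show "Poly_Mapping.keys \<alpha> \<subseteq> {..n+2} \<and> mon_deg \<alpha> = d \<and> x_degree n \<alpha> \<le> 1"
  proof cases
    case 1
    then obtain i where i: "i \<le> n" "\<alpha> \<in> Poly_Mapping.keys (mvar i * p i)"
      using subsetD[OF keys_sum 1] by blast
    have "Poly_Mapping.keys (mvar i :: 'a mpoly) = {Poly_Mapping.single i 1}"
      by (simp add: mvar_def)
    then obtain \<gamma> where \<alpha>_eq: "\<alpha> = Poly_Mapping.single i 1 + \<gamma>" and \<gamma>: "\<gamma> \<in> Poly_Mapping.keys (p i)"
      using subsetD[OF keys_mult i(2)] by auto
    have \<gamma>_uv: "Poly_Mapping.keys \<gamma> \<subseteq> {n+1, n+2}" "mon_deg \<gamma> = d - 1"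
      using keys_forms[OF p[rule_format, OF i(1)] \<gamma>] by auto
    have "Poly_Mapping.keys \<alpha> \<subseteq> {..n+2}"
      using i(1) \<gamma>_uv(1) by (auto simp: \<alpha>_eq keys_add_exponents)
    moreover have "mon_deg \<alpha> = d"
      using \<gamma>_uv(2) assms(2) by (simp add: \<alpha>_eq mon_deg_add mon_deg_single)
    moreover have "x_degree n \<alpha> = 1"
      using i(1) uv[OF \<gamma>_uv(1)] x_degree_single[of n i] by (simp add: \<alpha>_eq x_degree_add)
    ultimately show ?thesis by simp
  next
    case 2
    then have "Poly_Mapping.keys \<alpha> \<subseteq> {n+1, n+2}" "mon_deg \<alpha> = d"
      using keys_forms[OF g] by auto
    then show ?thesis using uv by auto
  qed
qed

lemma apolar_mmonom_mem_uv_forms: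
  assumes f: "perazzo_shape n d f" and \<beta>: "1 \<le> x_degree n \<beta>"
  shows "apolar (mmonom \<beta>) f \<in> forms {n+1, n+2} (d - mon_deg \<beta>)"
proof -
  have "apolar (mmonom \<beta>) (mmonom \<alpha>) \<in> (forms {n+1, n+2} (d - mon_deg \<beta>) :: 'a mpoly set)"
    if \<alpha>: "\<alpha> \<in> Poly_Mapping.keys f" for \<alpha>
  proof (cases "mdvd \<beta> \<alpha>")
    case True
    have \<alpha>_shape: "Poly_Mapping.keys \<alpha> \<subseteq> {..n+2}" "mon_deg \<alpha> = d" "x_degree n \<alpha> \<le> 1"
      using f \<alpha> by (auto simp: perazzo_shape_def)
    txt \<open>Since \<open>\<alpha>\<close> has \<open>x\<close>-degree at most one, \<open>\<beta>\<close> takes away all of its \<open>x\<close>-part.\<close>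
    have "x_degree n (\<alpha> - \<beta>) = 0"
      using True x_degree_mono[OF True, of n] \<alpha>_shape(3) \<beta>
      by (simp add: x_degree_def lookup_minus sum_subtractf_nat)
    then have "Poly_Mapping.keys (\<alpha> - \<beta>) \<subseteq> {n+1, n+2}"
      using keys_subset_uv_iff keys_diff_exponents_subset[of \<alpha> \<beta>] \<alpha>_shape(1) by blast
    then have "mmonom (\<alpha> - \<beta>) \<in> (forms {n+1, n+2} (d - mon_deg \<beta>) :: 'a mpoly set)"
      using mon_deg_diff[OF True] \<alpha>_shape(2) by (simp add: mmonom_in_forms_iff)
    then show ?thesis unfolding apolar_mmonom_dvd[OF True] by (rule forms_scale)
  qed (simp add: apolar_mmonom_not_dvd zero_in_forms)
  then show ?thesis
    by (subst apolar_eq_sum_mmonoms_right) (intro forms_sum forms_scale)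
qed

definition uv_part :: "nat \<Rightarrow> 'a::field mpoly \<Rightarrow> 'a mpoly" where
  "uv_part n l = (\<Sum>\<alpha>\<in>Poly_Mapping.keys l \<inter> uv_exponents n 1. mscale (Poly_Mapping.lookup l \<alpha>) (mmonom \<alpha>))"

definition x_part :: "nat \<Rightarrow> 'a::field mpoly \<Rightarrow> 'a mpoly" where
  "x_part n l = (\<Sum>\<alpha>\<in>Poly_Mapping.keys l - uv_exponents n 1. mscale (Poly_Mapping.lookup l \<alpha>) (mmonom \<alpha>))"

lemma x_part_add_uv_part: "x_part n l + uv_part n l = l"
proof -
  have "x_part n l + uv_part n l =
      (\<Sum>\<alpha>\<in>(Poly_Mapping.keys l - uv_exponents n 1) \<union> (Poly_Mapping.keys l \<inter> uv_exponents n 1).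
         mscale (Poly_Mapping.lookup l \<alpha>) (mmonom \<alpha>))"
    unfolding x_part_def uv_part_def by (rule sum.union_disjoint[symmetric]) auto
  also have "(Poly_Mapping.keys l - uv_exponents n 1) \<union> (Poly_Mapping.keys l \<inter> uv_exponents n 1) =
      Poly_Mapping.keys l"
    by blast
  finally show ?thesis by (simp flip: mpoly_eq_sum_mmonoms)
qed

section \<open>The \<open>h\<close>-vector of \<open>A\<^sub>f\<close>\<close>

definition partials :: "nat \<Rightarrow> 'a::field mpoly \<Rightarrow> nat \<Rightarrow> 'a mpoly set" where
  "partials n f i = (\<lambda>\<theta>. apolar \<theta> f) ` forms {..n+2} i"

lemma subspace_partials: "mv.subspace (partials n f i)"
  unfolding partials_def by (rule module_hom.subspace_image[OF mlinear_apolar_left subspace_forms])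

lemma mem_Ann_iff: "\<theta> \<in> forms {..n+2} k \<Longrightarrow> \<theta> \<in> Ann n f \<longleftrightarrow> apolar \<theta> f = 0"
  using forms_subset_polys_in by (auto simp: Ann_def)

lemma hvec_eq_dim_partials: "hvec n f i = mv.dim (partials n f i)"
proof -
  let ?W = "forms {..n+2} i :: 'a mpoly set"
  have "mv.dim ?W = mv.dim {\<theta>\<in>?W. apolar \<theta> f = 0} + mv.dim (partials n f i)"
    unfolding partials_def using mlinear_apolar_left[of f] finite_exponents_of_degree[of "{..n+2}" i]
    by (intro vector_space_pair.dim_eq_dim_kernel_add_dim_image[OF vector_space_pair_mscale _
          subspace_forms _ forms_subset_span_mmonoms])
       (simp_all add: module_hom_iff_linear)
  moreover have "Ann n f \<inter> ?W = {\<theta>\<in>?W. apolar \<theta> f = 0}"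
    using mem_Ann_iff by blast
  ultimately show ?thesis by (simp add: hvec_def)
qed

definition uv_spanning_set :: "nat \<Rightarrow> 'a::field mpoly \<Rightarrow> 'a mpoly \<Rightarrow> nat \<Rightarrow> nat \<Rightarrow> 'a mpoly set" where
  "uv_spanning_set n f \<theta> k m =
     (\<lambda>\<beta>. apolar (\<theta> * mmonom \<beta>) f) ` uv_exponents n k \<union> mmonom ` uv_exponents n m"

lemma finite_uv_spanning_set: "finite (uv_spanning_set n f \<theta> k m)"
  by (simp add: uv_spanning_set_def finite_uv_exponents)

lemma card_uv_spanning_set_le: "card (uv_spanning_set n f \<theta> k m) \<le> k + m + 2"
proof -
  have "card (uv_spanning_set n f \<theta> k m) \<le> card (uv_exponents n k) + card (uv_exponents n m)"
    unfolding uv_spanning_set_def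
    by (intro order_trans[OF card_Un_le] add_mono card_image_le finite_uv_exponents)
  then show ?thesis by (simp add: card_uv_exponents)
qed

lemma uv_forms_subset_span_uv_spanning_set:
  "forms {n+1, n+2} m \<subseteq> mv.span (uv_spanning_set n f \<theta> k m)"
proof -
  have "mv.span (mmonom ` uv_exponents n m) \<subseteq> mv.span (uv_spanning_set n f \<theta> k m)"
    by (rule mv.span_mono) (auto simp: uv_spanning_set_def)
  then show ?thesis using uv_forms_subset_span by blast
qed

lemma partials_subset_span_uv_spanning_set:
  assumes f: "perazzo_shape n d f"
  shows "partials n f i \<subseteq> mv.span (uv_spanning_set n f 1 i (d - i))"
proof
  fix p assume "p \<in> partials n f i"
  then obtain \<theta> where \<theta>: "\<theta> \<in> forms {..n+2} i" and p: "p = apolar \<theta> f"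
    by (auto simp: partials_def)
  have "apolar (mmonom \<beta>) f \<in> mv.span (uv_spanning_set n f 1 i (d - i))"
    if \<beta>: "\<beta> \<in> Poly_Mapping.keys \<theta>" for \<beta>
  proof (cases "x_degree n \<beta> = 0")
    case True
    then have "\<beta> \<in> uv_exponents n i"
      using keys_forms[OF \<theta> \<beta>] keys_subset_uv_iff by (simp add: mem_uv_exponents_iff)
    then have "apolar (1 * mmonom \<beta>) f \<in> uv_spanning_set n f 1 i (d - i)"
      unfolding uv_spanning_set_def by blast
    then show ?thesis by (simp add: mv.span_base)
  next
    case False
    then have "apolar (mmonom \<beta>) f \<in> forms {n+1, n+2} (d - i)"
      using apolar_mmonom_mem_uv_forms[OF f, of \<beta>] keys_forms[OF \<theta> \<beta>] by simp
    then show ?thesis using uv_forms_subset_span_uv_spanning_set by blast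
  qed
  then show "p \<in> mv.span (uv_spanning_set n f 1 i (d - i))"
    unfolding p by (subst apolar_eq_sum_mmonoms_left) (intro mv.span_sum mv.span_scale)
qed

lemma uv_forms_subset_partials:
  assumes f: "perazzo_shape n d f" and "i \<le> d" "hvec n f i = d + 2"
  shows "forms {n+1, n+2} (d - i) \<subseteq> partials n f i"
proof -
  have "uv_spanning_set n f 1 i (d - i) \<subseteq> partials n f i"
    using card_uv_spanning_set_le[of n f 1 i "d - i"] assms(2,3)
    by (intro mv.subset_subspace_if_card_le_dim[OF subspace_partials finite_uv_spanning_set
          partials_subset_span_uv_spanning_set[OF f]])
       (simp add: hvec_eq_dim_partials)
  then have "mv.span (uv_spanning_set n f 1 i (d - i)) \<subseteq> partials n f i"
    by (rule mv.span_minimal[OF _ subspace_partials])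
  then show ?thesis using uv_forms_subset_span_uv_spanning_set by blast
qed

definition mult_injective :: "nat \<Rightarrow> 'a::field mpoly \<Rightarrow> 'a mpoly \<Rightarrow> nat \<Rightarrow> bool" where
  "mult_injective n f l i \<longleftrightarrow> (\<forall>\<theta>\<in>forms {..n+2} i. l * \<theta> \<in> Ann n f \<longrightarrow> \<theta> \<in> Ann n f)"

definition mult_surjective :: "nat \<Rightarrow> 'a::field mpoly \<Rightarrow> 'a mpoly \<Rightarrow> nat \<Rightarrow> bool" where
  "mult_surjective n f l i \<longleftrightarrow>
     (\<forall>\<eta>\<in>forms {..n+2} (i+1). \<exists>\<theta>\<in>forms {..n+2} i. \<eta> - l * \<theta> \<in> Ann n f)"

lemma WLP_iff:
  "WLP n f \<longleftrightarrow> (\<exists>l\<in>forms {..n+2} 1. \<forall>i. mult_injective n f l i \<or> mult_surjective n f l i)"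
  by (simp add: WLP_def mult_injective_def mult_surjective_def)

lemma not_mult_injective_if_hvec_eq:
  assumes f: "perazzo_shape n d f" and l: "l \<in> forms {..n+2} 1"
    and "i \<le> d" "hvec n f i = d + 2"
  shows "\<not> mult_injective n f l i"
proof -
  obtain w where w: "w \<in> forms {n+1, n+2} (d - i)" "w \<noteq> 0" "apolar l w = 0"
    using exists_uv_form_annihilated[OF l] by blast
  then obtain \<theta> where \<theta>: "\<theta> \<in> forms {..n+2} i" "w = apolar \<theta> f"
    using uv_forms_subset_partials[OF f assms(3,4)] by (auto simp: partials_def)
  have "l * \<theta> \<in> Ann n f"
    using w(3) \<theta>(2) by (simp add: mem_Ann_iff[OF forms_mult[OF l \<theta>(1)]] apolar_mult)
  moreover have "\<theta> \<notin> Ann n f"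
    using w(2) \<theta>(2) by (simp add: mem_Ann_iff[OF \<theta>(1)])
  ultimately show ?thesis using \<theta>(1) by (auto simp: mult_injective_def)
qed

lemma mult_surjective_iff:
  assumes l: "l \<in> forms {..n+2} 1"
  shows "mult_surjective n f l i \<longleftrightarrow>
    forms {..n+2} (i+1) \<subseteq> {\<eta>. \<exists>\<theta>\<in>forms {..n+2} i. apolar \<eta> f = apolar (l * \<theta>) f}"
proof -
  have "\<eta> - l * \<theta> \<in> Ann n f \<longleftrightarrow> apolar \<eta> f = apolar (l * \<theta>) f"
    if "\<eta> \<in> forms {..n+2} (i+1)" "\<theta> \<in> forms {..n+2} i" for \<eta> \<theta>
  proof -
    have "\<eta> - l * \<theta> \<in> forms {..n+2} (i+1)"
      using forms_diff[OF that(1)] forms_mult[OF l that(2)] by (simp add: add.commute)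
    then show ?thesis by (simp add: mem_Ann_iff apolar_diff_left)
  qed
  then show ?thesis unfolding mult_surjective_def by blast
qed

lemma subspace_apolar_congruent_multiples:
  "mv.subspace {\<eta>. \<exists>\<theta>\<in>forms V i. apolar \<eta> f = apolar (l * \<theta>) (f :: 'a::field mpoly)}"
proof (rule mv.subspaceI)
  show "0 \<in> {\<eta>. \<exists>\<theta>\<in>forms V i. apolar \<eta> f = apolar (l * \<theta>) f}"
    by (intro CollectI bexI[of _ 0] zero_in_forms) simp
next
  fix x y assume "x \<in> {\<eta>. \<exists>\<theta>\<in>forms V i. apolar \<eta> f = apolar (l * \<theta>) f}"
    and "y \<in> {\<eta>. \<exists>\<theta>\<in>forms V i. apolar \<eta> f = apolar (l * \<theta>) f}"
  then obtain \<theta>x \<theta>y where "\<theta>x \<in> forms V i" "apolar x f = apolar (l * \<theta>x) f"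
    and "\<theta>y \<in> forms V i" "apolar y f = apolar (l * \<theta>y) f"
    by blast
  then show "x + y \<in> {\<eta>. \<exists>\<theta>\<in>forms V i. apolar \<eta> f = apolar (l * \<theta>) f}"
    by (intro CollectI bexI[of _ "\<theta>x + \<theta>y"] forms_add) (simp_all add: apolar_add_left distrib_left)
next
  fix c x assume "x \<in> {\<eta>. \<exists>\<theta>\<in>forms V i. apolar \<eta> f = apolar (l * \<theta>) f}"
  then obtain \<theta> where "\<theta> \<in> forms V i" "apolar x f = apolar (l * \<theta>) f" by blast
  then show "mscale c x \<in> {\<eta>. \<exists>\<theta>\<in>forms V i. apolar \<eta> f = apolar (l * \<theta>) f}"
    by (intro CollectI bexI[of _ "mscale c \<theta>"] forms_scale)
       (simp_all add: apolar_scale_left mult_mscale_right)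
qed

text \<open>Surjectivity propagates upwards because \<open>R\<close> is generated in degree one: if
  \<open>y\<^sup>\<alpha>' = \<ell>\<theta>\<close> modulo \<open>Ann(f)\<close>, then \<open>y\<^sub>t y\<^sup>\<alpha>' = \<ell>(y\<^sub>t\<theta>)\<close> modulo \<open>Ann(f)\<close>.\<close>

lemma exists_apolar_mmonom_eq_apolar_mult:
  assumes l: "l \<in> forms {..n+2} 1" and surj: "mult_surjective n f l i"
    and \<alpha>: "Poly_Mapping.keys \<alpha> \<subseteq> {..n+2}" "mon_deg \<alpha> = Suc i + 1"
  shows "\<exists>\<theta>\<in>forms {..n+2} (Suc i). apolar (mmonom \<alpha>) f = apolar (l * \<theta>) f"
proof -
  obtain t where t: "t \<in> Poly_Mapping.keys \<alpha>"
    using \<alpha>(2) mon_deg_eq_0_iff[of \<alpha>] by fastforce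
  let ?e = "Poly_Mapping.single t (1::nat)"
  have e_dvd: "mdvd ?e \<alpha>"
    using t by (auto simp: lookup_single when_def in_keys_iff)
  then have \<alpha>_eq: "\<alpha> = ?e + (\<alpha> - ?e)"
    by (intro poly_mapping_eqI) (simp add: lookup_add lookup_minus)
  have "mmonom (\<alpha> - ?e) \<in> (forms {..n+2} (i+1) :: 'a mpoly set)"
    using keys_diff_exponents_subset[of \<alpha> ?e] \<alpha> mon_deg_diff[OF e_dvd]
    by (auto simp: mmonom_in_forms_iff mon_deg_single)
  then obtain \<theta> where \<theta>: "\<theta> \<in> forms {..n+2} i" "apolar (mmonom (\<alpha> - ?e)) f = apolar (l * \<theta>) f"
    using surj mult_surjective_iff[OF l] by blast
  have t_var: "mvar t \<in> (forms {..n+2} 1 :: 'a mpoly set)"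
    using t \<alpha>(1) by (intro mvar_in_forms) auto
  have "apolar (mmonom \<alpha>) f = apolar (mvar t) (apolar (mmonom (\<alpha> - ?e)) f)"
    by (subst \<alpha>_eq) (simp only: mvar_eq_mmonom apolar_mult flip: mmonom_mult)
  also have "\<dots> = apolar (mvar t) (apolar (l * \<theta>) f)"
    by (simp only: \<theta>(2))
  also have "\<dots> = apolar (l * (mvar t * \<theta>)) f"
    by (metis apolar_mult mult.left_commute)
  finally show ?thesis
    using forms_mult[OF t_var \<theta>(1)] by auto
qed

lemma mult_surjective_Suc:
  assumes l: "l \<in> forms {..n+2} 1" and surj: "mult_surjective n f l i"
  shows "mult_surjective n f l (Suc i)"
proof -
  let ?S = "{\<eta>. \<exists>\<theta>\<in>forms {..n+2} (Suc i). apolar \<eta> f = apolar (l * \<theta>) f}"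
  have "mmonom ` {\<alpha>. Poly_Mapping.keys \<alpha> \<subseteq> {..n+2} \<and> mon_deg \<alpha> = Suc i + 1} \<subseteq> ?S"
    using exists_apolar_mmonom_eq_apolar_mult[OF l surj] by blast
  then have "mv.span (mmonom ` {\<alpha>. Poly_Mapping.keys \<alpha> \<subseteq> {..n+2} \<and> mon_deg \<alpha> = Suc i + 1}) \<subseteq> ?S"
    by (rule mv.span_minimal[OF _ subspace_apolar_congruent_multiples])
  then show ?thesis
    using forms_subset_span_mmonoms mult_surjective_iff[OF l] by blast
qed

lemma mult_surjective_mono:
  assumes l: "l \<in> forms {..n+2} 1" and "mult_surjective n f l i" "i \<le> j"
  shows "mult_surjective n f l j"
  using assms(3,2) by (induction j rule: dec_induct) (auto intro: mult_surjective_Suc[OF l])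

text \<open>Only the \<open>U, V\<close>-part of \<open>\<ell>\<close> can produce partials outside \<open>K[u,v]\<^sub>d\<^sub>-\<^sub>k\<^sub>-\<^sub>1\<close>, and only when
  applied after a pure \<open>U, V\<close>-monomial.\<close>

lemma apolar_mult_mmonom_mem_span:
  assumes f: "perazzo_shape n d f" and l: "l \<in> forms {..n+2} 1"
    and \<beta>: "Poly_Mapping.keys \<beta> \<subseteq> {..n+2}" "mon_deg \<beta> = k"
  shows "apolar (l * mmonom \<beta>) f \<in> mv.span (uv_spanning_set n f (uv_part n l) k (d - Suc k))"
proof (cases "x_degree n \<beta> = 0")
  case True
  then have \<beta>_uv: "\<beta> \<in> uv_exponents n k"
    using \<beta> keys_subset_uv_iff by (simp add: mem_uv_exponents_iff)
  have x_terms: "apolar (mmonom (\<alpha> + \<beta>)) f \<in> forms {n+1, n+2} (d - Suc k)"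
    if \<alpha>: "\<alpha> \<in> Poly_Mapping.keys l - uv_exponents n 1" for \<alpha>
  proof -
    have "Poly_Mapping.keys \<alpha> \<subseteq> {..n+2}" "mon_deg \<alpha> = 1"
      using keys_forms[OF l] \<alpha> by auto
    then have "x_degree n \<alpha> \<noteq> 0"
      using \<alpha> keys_subset_uv_iff by (auto simp: mem_uv_exponents_iff)
    then show ?thesis
      using apolar_mmonom_mem_uv_forms[OF f, of "\<alpha> + \<beta>"] \<open>mon_deg \<alpha> = 1\<close> \<beta>(2)
      by (simp add: x_degree_add mon_deg_add)
  qed
  have x_eq: "x_part n l * mmonom \<beta> =
      (\<Sum>\<alpha>\<in>Poly_Mapping.keys l - uv_exponents n 1. mscale (Poly_Mapping.lookup l \<alpha>) (mmonom (\<alpha> + \<beta>)))"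
    by (simp add: x_part_def sum_distrib_right mult_mscale_left mmonom_mult)
  have "apolar (x_part n l * mmonom \<beta>) f \<in> forms {n+1, n+2} (d - Suc k)"
    unfolding x_eq apolar_sum_left apolar_scale_left by (intro forms_sum forms_scale x_terms)
  then have "apolar (x_part n l * mmonom \<beta>) f \<in> mv.span (uv_spanning_set n f (uv_part n l) k (d - Suc k))"
    using uv_forms_subset_span_uv_spanning_set by blast
  moreover have "apolar (uv_part n l * mmonom \<beta>) f \<in> uv_spanning_set n f (uv_part n l) k (d - Suc k)"
    using \<beta>_uv by (simp add: uv_spanning_set_def)
  ultimately show ?thesis
    by (subst x_part_add_uv_part[symmetric, of l n])
       (simp add: distrib_right apolar_add_left mv.span_add mv.span_base)
next
  case False
  then have "apolar (mmonom \<beta>) f \<in> forms {n+1, n+2} (d - k)"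
    using apolar_mmonom_mem_uv_forms[OF f, of \<beta>] \<beta>(2) by simp
  from apolar_mem_forms[OF l this]
  have "apolar (l * mmonom \<beta>) f \<in> forms {n+1, n+2} (d - Suc k)"
    by (simp add: apolar_mult)
  then show ?thesis using uv_forms_subset_span_uv_spanning_set by blast
qed

lemma partials_subset_span_if_mult_surjective:
  assumes f: "perazzo_shape n d f" and l: "l \<in> forms {..n+2} 1" and "mult_surjective n f l k"
  shows "partials n f (Suc k) \<subseteq> mv.span (uv_spanning_set n f (uv_part n l) k (d - Suc k))"
proof
  fix p assume "p \<in> partials n f (Suc k)"
  then obtain \<eta> where "\<eta> \<in> forms {..n+2} (k+1)" and "p = apolar \<eta> f"
    by (auto simp: partials_def)
  then obtain \<theta> where \<theta>: "\<theta> \<in> forms {..n+2} k" and p: "p = apolar (l * \<theta>) f"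
    using assms(3) mult_surjective_iff[OF l] by blast
  have sum_eq: "l * \<theta> = (\<Sum>\<beta>\<in>Poly_Mapping.keys \<theta>. mscale (Poly_Mapping.lookup \<theta> \<beta>) (l * mmonom \<beta>))"
    by (subst mpoly_eq_sum_mmonoms[of \<theta>]) (simp add: sum_distrib_left mult_mscale_right)
  show "p \<in> mv.span (uv_spanning_set n f (uv_part n l) k (d - Suc k))"
    unfolding p sum_eq apolar_sum_left apolar_scale_left
    using keys_forms[OF \<theta>]
    by (intro mv.span_sum mv.span_scale apolar_mult_mmonom_mem_span[OF f l]) auto
qed

lemma hvec_le_if_mult_surjective:
  assumes f: "perazzo_shape n d f" and l: "l \<in> forms {..n+2} 1"
    and "k < d" "mult_surjective n f l k"
  shows "hvec n f (Suc k) \<le> d + 1"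
proof -
  have "hvec n f (Suc k) \<le> card (uv_spanning_set n f (uv_part n l) k (d - Suc k))"
    unfolding hvec_eq_dim_partials
    by (rule mv.dim_le_card[OF partials_subset_span_if_mult_surjective[OF f l assms(4)]
          finite_uv_spanning_set])
  also have "\<dots> \<le> d + 1"
    using card_uv_spanning_set_le[of n f "uv_part n l" k "d - Suc k"] \<open>k < d\<close> by simp
  finally show ?thesis .
qed

theorem proposition4p5:
  fixes f :: "'a::field_char_0 mpoly" and n d :: nat
  assumes "alg_closed TYPE('a)"
    and "n \<ge> 2" and "d \<ge> n + 1"
    and "perazzo_form n d f"
    and "WLP n f"
  shows "card {i. i \<le> d \<and> hvec n f i = d + 2} \<le> 1"
proof -
  have f: "perazzo_shape n d f"
    using perazzo_form_imp_perazzo_shape[OF assms(4)] assms(3) by simp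
  obtain l where l: "l \<in> forms {..n+2} 1"
    and wlp: "\<And>i. mult_injective n f l i \<or> mult_surjective n f l i"
    using assms(5) by (auto simp: WLP_iff)
  let ?T = "{i. i \<le> d \<and> hvec n f i = d + 2}"
  have no_two: False if "a \<in> ?T" "b \<in> ?T" "a < b" for a b
  proof -
    have "mult_surjective n f l a"
      using wlp not_mult_injective_if_hvec_eq[OF f l] that(1) by blast
    then have surj: "mult_surjective n f l (b - 1)"
      using mult_surjective_mono[OF l] that(3) by simp
    have "b - 1 < d" and b_eq: "Suc (b - 1) = b" using that by auto
    then have "hvec n f (Suc (b - 1)) \<le> d + 1"
      using hvec_le_if_mult_surjective[OF f l] surj by blast
    then show False using that(2) b_eq by simp
  qed
  have "a = b" if "a \<in> ?T" "b \<in> ?T" for a b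
    using no_two[OF that] no_two[OF that(2,1)] by force
  moreover have "finite ?T" by (rule finite_subset[of _ "{..d}"]) auto
  ultimately show ?thesis by (simp add: card_le_Suc0_iff_eq)
qed

end
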